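(* Let $G'$ be an $\mathcal{R}_3$-independent graph and let $G$ be obtained from $G'$ by a double-1-extension. Then $G$ is $\mathcal{R}_3$-independent.
   Context: All graphs are finite and simple. $G$ is obtained from $G'$ by a double-1-extension if $G$ is obtained by deleting an edge $uv$ of $G'$, adding two new vertices $a,b$, and adding 7 new edges: $ab$, three edges joining $a$ to vertices of $G'$ and three edges joining $b$ to vertices of $G'$, such that $u,v\in N(a)\cup N(b)$. For $p:V\to\mathbb{R}^3$, the rigidity matrix $R(G,p)$ is the $|E|\times 3|V|$ matrix whose row for edge $xy$ has $p(x)-p(y)$ in the columns of $x$, $p(y)-p(x)$ in the columns of $y$, zeros elsewhere; a graph is $\mathcal{R}_3$-independent if these rows are linearly independent for generic $p$ (coordinates algebraically independent over $\mathbb{Q}$). *)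

theory Defs
  imports "HOL-Analysis.Analysis"
begin

definition simple_graph :: "'a set \<Rightarrow> 'a set set \<Rightarrow> bool" where
  "simple_graph V E \<longleftrightarrow> finite V \<and> (\<forall>e\<in>E. e \<subseteq> V \<and> card e = 2)"

text \<open>A polynomial is given by a finite set M of distinct monomials
  (exponent vectors supported on I) with rational coefficients c.\<close>
definition alg_indep_over_Q :: "'i set \<Rightarrow> ('i \<Rightarrow> real) \<Rightarrow> bool" where
  "alg_indep_over_Q I x \<longleftrightarrow>
     (\<forall>(M :: ('i \<Rightarrow> nat) set) (c :: ('i \<Rightarrow> nat) \<Rightarrow> rat).
        finite M \<longrightarrow> (\<forall>\<alpha>\<in>M. \<forall>i. i \<notin> I \<longrightarrow> \<alpha> i = 0) \<longrightarrow>
        (\<Sum>\<alpha>\<in>M. of_rat (c \<alpha>) * (\<Prod>i\<in>I. x i ^ \<alpha> i)) = 0 \<longrightarrow>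
        (\<forall>\<alpha>\<in>M. c \<alpha> = 0))"

definition generic3 :: "'a set \<Rightarrow> ('a \<Rightarrow> real^3) \<Rightarrow> bool" where
  "generic3 V p \<longleftrightarrow> alg_indep_over_Q (V \<times> (UNIV :: 3 set)) (\<lambda>(v, k). p v $ k)"

text \<open>Row of the rigidity matrix R(G,p) for the edge e = {x,y}, as a vector indexed by the
  columns (vertex, coordinate): p(x)-p(y) in the columns of x, p(y)-p(x) in those of y,
  zero elsewhere. (Independent of the orientation of the edge.)\<close>
definition rigidity_row :: "('a \<Rightarrow> real^3) \<Rightarrow> 'a set \<Rightarrow> ('a \<times> 3) \<Rightarrow> real" where
  "rigidity_row p e = (\<lambda>(z, k). if z \<in> e then (\<Sum>w\<in>e - {z}. (p z - p w) $ k) else 0)"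

definition rows_lin_indep :: "'a set set \<Rightarrow> ('a \<Rightarrow> real^3) \<Rightarrow> bool" where
  "rows_lin_indep E p \<longleftrightarrow>
     (\<forall>c :: 'a set \<Rightarrow> real. (\<forall>j. (\<Sum>e\<in>E. c e * rigidity_row p e j) = 0)
        \<longrightarrow> (\<forall>e\<in>E. c e = 0))"

definition R3_independent :: "'a set \<Rightarrow> 'a set set \<Rightarrow> bool" where
  "R3_independent V E \<longleftrightarrow> (\<forall>p. generic3 V p \<longrightarrow> rows_lin_indep E p)"

definition double_1_extension ::
  "'a set \<Rightarrow> 'a set set \<Rightarrow> 'a set \<Rightarrow> 'a set set \<Rightarrow> bool" where
  "double_1_extension V' E' V E \<longleftrightarrow>
     (\<exists>u v a b Na Nb. {u, v} \<in> E' \<and> a \<notin> V' \<and> b \<notin> V' \<and> a \<noteq> b \<and>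
        Na \<subseteq> V' \<and> Nb \<subseteq> V' \<and> card Na = 3 \<and> card Nb = 3 \<and>
        u \<in> Na \<union> Nb \<and> v \<in> Na \<union> Nb \<and>
        V = V' \<union> {a, b} \<and>
        E = (E' - {{u, v}}) \<union> {{a, b}} \<union> ((\<lambda>x. {a, x}) ` Na) \<union> ((\<lambda>y. {b, y}) ` Nb))"

end

theory Submission
  imports Defs "Jordan_Normal_Form.Determinant"
begin

(* Independence of the rows of R(G,p) is equivalent to the nonvanishing of their Gram
   determinant, a polynomial with rational coefficients in the coordinates of p; so it holds at
   every generic p as soon as it holds at a single realisation q. Such a q is obtained from a
   generic p by moving a, and possibly b, onto the line uv: a to the midpoint if u and v are both
   neighbours of a (up to swapping a and b), otherwise a and b to the points at 1/3 and 2/3 of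
   the segment. Genericity keeps the other neighbours of a and b off that line, so equilibrium
   at a and b forces a self-stress of G at q to vanish on every new edge except those of the
   path u-a-v resp. u-a-b-v, where it is constant; seen from the old vertices, these edges then
   act as a stress on the deleted edge uv. This gives a self-stress of G' at q, which vanishes
   since q agrees with p on G'. *)

(* Jordan_Normal_Form's notations for vec_index and scalar_prod clash with vec_nth and inner. *)
no_notation vec_index (infixl \<open>$\<close> 100) and scalar_prod (infix \<open>\<bullet>\<close> 70)

section \<open>Polynomial functions with rational coefficients\<close>

definition eval_monom :: "'i set \<Rightarrow> ('i \<Rightarrow> real) \<Rightarrow> ('i \<Rightarrow> nat) \<Rightarrow> real" where
  "eval_monom I x \<alpha> = (\<Prod>i\<in>I. x i ^ \<alpha> i)"

definition rat_poly_fun :: "'i set \<Rightarrow> (('i \<Rightarrow> real) \<Rightarrow> real) \<Rightarrow> bool" where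
  "rat_poly_fun I f \<longleftrightarrow> (\<exists>M c. finite M \<and> (\<forall>\<alpha>\<in>M. \<forall>i. i \<notin> I \<longrightarrow> \<alpha> i = 0) \<and>
      (\<forall>x. f x = (\<Sum>\<alpha>\<in>M. of_rat (c \<alpha>) * eval_monom I x \<alpha>)))"

lemma rat_poly_fun_const: "rat_poly_fun I (\<lambda>x. of_rat r)"
  unfolding rat_poly_fun_def
  by (intro exI[of _ "{\<lambda>_. 0}"] exI[of _ "\<lambda>_. r"]) (simp add: eval_monom_def)

lemma rat_poly_fun_of_int: "rat_poly_fun I (\<lambda>x. of_int k)"
  using rat_poly_fun_const[of I "of_int k"] by simp

lemma rat_poly_fun_var:
  assumes "finite I" "i \<in> I"
  shows "rat_poly_fun I (\<lambda>x. x i)"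
proof -
  have "eval_monom I x (\<lambda>j. if j = i then 1 else 0) = x i" for x
    unfolding eval_monom_def using assms
    by (simp add: if_distrib[of "\<lambda>n. x _ ^ n"] cong: if_cong)
  then show ?thesis
    unfolding rat_poly_fun_def using assms
    by (intro exI[of _ "{\<lambda>j. if j = i then 1 else 0}"] exI[of _ "\<lambda>_. 1"]) simp
qed

lemma rat_poly_fun_add:
  assumes "rat_poly_fun I f" "rat_poly_fun I g"
  shows "rat_poly_fun I (\<lambda>x. f x + g x)"
proof -
  obtain M1 c1 where M1: "finite M1" "\<forall>\<alpha>\<in>M1. \<forall>i. i \<notin> I \<longrightarrow> \<alpha> i = 0"
    and f: "\<And>x. f x = (\<Sum>\<alpha>\<in>M1. of_rat (c1 \<alpha>) * eval_monom I x \<alpha>)"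
    using assms(1) unfolding rat_poly_fun_def by blast
  obtain M2 c2 where M2: "finite M2" "\<forall>\<alpha>\<in>M2. \<forall>i. i \<notin> I \<longrightarrow> \<alpha> i = 0"
    and g: "\<And>x. g x = (\<Sum>\<alpha>\<in>M2. of_rat (c2 \<alpha>) * eval_monom I x \<alpha>)"
    using assms(2) unfolding rat_poly_fun_def by blast
  define c where "c \<alpha> = (if \<alpha> \<in> M1 then c1 \<alpha> else 0) + (if \<alpha> \<in> M2 then c2 \<alpha> else 0)" for \<alpha>
  have "f x + g x = (\<Sum>\<alpha>\<in>M1 \<union> M2. of_rat (c \<alpha>) * eval_monom I x \<alpha>)" for x
  proof -
    have "f x = (\<Sum>\<alpha>\<in>M1 \<union> M2. if \<alpha> \<in> M1 then of_rat (c1 \<alpha>) * eval_monom I x \<alpha> else 0)"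
      "g x = (\<Sum>\<alpha>\<in>M1 \<union> M2. if \<alpha> \<in> M2 then of_rat (c2 \<alpha>) * eval_monom I x \<alpha> else 0)"
      using M1 M2 by (simp_all add: f g sum.inter_restrict[symmetric] Int_absorb1)
    moreover have "(\<Sum>\<alpha>\<in>M1 \<union> M2. of_rat (c \<alpha>) * eval_monom I x \<alpha>) =
        (\<Sum>\<alpha>\<in>M1 \<union> M2. (if \<alpha> \<in> M1 then of_rat (c1 \<alpha>) * eval_monom I x \<alpha> else 0) +
                        (if \<alpha> \<in> M2 then of_rat (c2 \<alpha>) * eval_monom I x \<alpha> else 0))"
      by (rule sum.cong) (auto simp: c_def of_rat_add distrib_right)
    ultimately show ?thesis
      by (simp add: sum.distrib)
  qed
  then show ?thesis
    unfolding rat_poly_fun_def using M1 M2 by (intro exI[of _ "M1 \<union> M2"] exI[of _ c]) auto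
qed

lemma rat_poly_fun_mult:
  assumes "rat_poly_fun I f" "rat_poly_fun I g"
  shows "rat_poly_fun I (\<lambda>x. f x * g x)"
proof -
  obtain M1 c1 where M1: "finite M1" "\<forall>\<alpha>\<in>M1. \<forall>i. i \<notin> I \<longrightarrow> \<alpha> i = 0"
    and f: "\<And>x. f x = (\<Sum>\<alpha>\<in>M1. of_rat (c1 \<alpha>) * eval_monom I x \<alpha>)"
    using assms(1) unfolding rat_poly_fun_def by blast
  obtain M2 c2 where M2: "finite M2" "\<forall>\<alpha>\<in>M2. \<forall>i. i \<notin> I \<longrightarrow> \<alpha> i = 0"
    and g: "\<And>x. g x = (\<Sum>\<alpha>\<in>M2. of_rat (c2 \<alpha>) * eval_monom I x \<alpha>)"
    using assms(2) unfolding rat_poly_fun_def by blast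
  define S where "S = M1 \<times> M2"
  define h :: "('a \<Rightarrow> nat) \<times> ('a \<Rightarrow> nat) \<Rightarrow> 'a \<Rightarrow> nat"
    where "h s i = fst s i + snd s i" for s i
  define C where "C s = c1 (fst s) * c2 (snd s)" for s
  define c where "c \<gamma> = (\<Sum>s\<in>{s \<in> S. h s = \<gamma>}. C s)" for \<gamma>
  have fin: "finite S" using M1 M2 by (simp add: S_def)
  have monom_h: "eval_monom I x (h s) = eval_monom I x (fst s) * eval_monom I x (snd s)" for x s
    by (simp add: eval_monom_def h_def power_add prod.distrib)
  have "f x * g x = (\<Sum>\<gamma>\<in>h ` S. of_rat (c \<gamma>) * eval_monom I x \<gamma>)" for x
  proof -
    have "f x * g x = (\<Sum>s\<in>S. of_rat (C s) * eval_monom I x (h s))"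
      unfolding f g sum_product S_def sum.cartesian_product monom_h
      by (rule sum.cong) (auto simp: C_def of_rat_mult)
    also have "\<dots> = (\<Sum>\<gamma>\<in>h ` S. \<Sum>s\<in>{s \<in> S. h s = \<gamma>}. of_rat (C s) * eval_monom I x (h s))"
      by (rule sum.group[symmetric, OF fin finite_imageI[OF fin] subset_refl])
    also have "\<dots> = (\<Sum>\<gamma>\<in>h ` S. of_rat (c \<gamma>) * eval_monom I x \<gamma>)"
      by (rule sum.cong) (auto simp: c_def of_rat_sum sum_distrib_right)
    finally show ?thesis .
  qed
  moreover have "\<forall>\<alpha>\<in>h ` S. \<forall>i. i \<notin> I \<longrightarrow> \<alpha> i = 0"
    using M1 M2 by (auto simp: S_def h_def)
  ultimately show ?thesis
    unfolding rat_poly_fun_def using fin by blast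
qed

lemma rat_poly_fun_minus: "rat_poly_fun I f \<Longrightarrow> rat_poly_fun I (\<lambda>x. - f x)"
  using rat_poly_fun_mult[OF rat_poly_fun_of_int[of I "-1"]] by simp

lemma rat_poly_fun_diff:
  "rat_poly_fun I f \<Longrightarrow> rat_poly_fun I g \<Longrightarrow> rat_poly_fun I (\<lambda>x. f x - g x)"
  using rat_poly_fun_add[OF _ rat_poly_fun_minus] by simp

lemma rat_poly_fun_sum:
  assumes "finite S" "\<And>s. s \<in> S \<Longrightarrow> rat_poly_fun I (f s)"
  shows "rat_poly_fun I (\<lambda>x. \<Sum>s\<in>S. f s x)"
  using assms
  by (induction S rule: finite_induct)
    (simp_all add: rat_poly_fun_add rat_poly_fun_of_int[of I 0, simplified])

lemma rat_poly_fun_prod: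
  assumes "finite S" "\<And>s. s \<in> S \<Longrightarrow> rat_poly_fun I (f s)"
  shows "rat_poly_fun I (\<lambda>x. \<Prod>s\<in>S. f s x)"
  using assms
  by (induction S rule: finite_induct)
    (simp_all add: rat_poly_fun_mult rat_poly_fun_of_int[of I 1, simplified])

lemma rat_poly_fun_nonzero_at_alg_indep:
  assumes "alg_indep_over_Q I x" "rat_poly_fun I f" "f y \<noteq> 0"
  shows "f x \<noteq> 0"
proof
  assume "f x = 0"
  obtain M c where M: "finite M" "\<forall>\<alpha>\<in>M. \<forall>i. i \<notin> I \<longrightarrow> \<alpha> i = 0"
    and f: "\<And>x. f x = (\<Sum>\<alpha>\<in>M. of_rat (c \<alpha>) * eval_monom I x \<alpha>)"
    using assms(2) unfolding rat_poly_fun_def by blast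
  have "\<forall>\<alpha>\<in>M. c \<alpha> = 0"
    using assms(1) M \<open>f x = 0\<close> unfolding alg_indep_over_Q_def f eval_monom_def by blast
  then have "f y = 0" by (simp add: f)
  with assms(3) show False by simp
qed

lemma alg_indep_over_Q_subset:
  assumes "alg_indep_over_Q I x" "J \<subseteq> I" "finite I"
  shows "alg_indep_over_Q J x"
  unfolding alg_indep_over_Q_def
proof (intro allI impI)
  fix M :: "('a \<Rightarrow> nat) set" and c
  assume M: "finite M" "\<forall>\<alpha>\<in>M. \<forall>i. i \<notin> J \<longrightarrow> \<alpha> i = 0"
    and zero: "(\<Sum>\<alpha>\<in>M. of_rat (c \<alpha>) * (\<Prod>i\<in>J. x i ^ \<alpha> i)) = 0"
  have "(\<Prod>i\<in>J. x i ^ \<alpha> i) = (\<Prod>i\<in>I. x i ^ \<alpha> i)" if "\<alpha> \<in> M" for \<alpha>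
    using M that assms(2,3) by (intro prod.mono_neutral_left) auto
  then have "(\<Sum>\<alpha>\<in>M. of_rat (c \<alpha>) * (\<Prod>i\<in>I. x i ^ \<alpha> i)) = 0"
    using zero by simp
  moreover have "\<forall>\<alpha>\<in>M. \<forall>i. i \<notin> I \<longrightarrow> \<alpha> i = 0"
    using M assms(2) by auto
  ultimately show "\<forall>\<alpha>\<in>M. c \<alpha> = 0"
    using assms(1) M(1) unfolding alg_indep_over_Q_def by blast
qed

definition coords :: "('a \<Rightarrow> real^3) \<Rightarrow> 'a \<times> 3 \<Rightarrow> real" where
  "coords p = (\<lambda>(v, k). p v $ k)"

definition config :: "('a \<times> 3 \<Rightarrow> real) \<Rightarrow> 'a \<Rightarrow> real^3" where
  "config x v = (\<chi> k. x (v, k))"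

lemma config_coords [simp]: "config (coords p) = p"
  unfolding config_def coords_def by (simp add: fun_eq_iff vec_eq_iff)

lemma rat_poly_fun_config_nth:
  "finite V \<Longrightarrow> w \<in> V \<Longrightarrow> rat_poly_fun (V \<times> UNIV) (\<lambda>x. config x w $ k)"
  by (simp add: config_def rat_poly_fun_var)

lemma generic3_nonzero:
  assumes "generic3 V p" "rat_poly_fun (V \<times> UNIV) (\<lambda>x. F (config x))" "F p0 \<noteq> 0"
  shows "F p \<noteq> 0"
  using rat_poly_fun_nonzero_at_alg_indep[OF _ assms(2), of "coords p" "coords p0"] assms(1,3)
  unfolding generic3_def coords_def[symmetric] by simp

lemma rigidity_row_outside: "z \<notin> e \<Longrightarrow> rigidity_row p e (z, k) = 0"
  by (simp add: rigidity_row_def)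

lemma rigidity_row_doubleton:
  assumes "x \<noteq> y"
  shows "rigidity_row p {x, y} (z, k) =
    (if z = x then (p x - p y) $ k else if z = y then (p y - p x) $ k else 0)"
proof -
  have "{x, y} - {x} = {y}" "{x, y} - {y} = {x}" using assms by auto
  then show ?thesis by (simp add: rigidity_row_def)
qed

lemma rigidity_row_cong: "(\<And>w. w \<in> e \<Longrightarrow> q w = p w) \<Longrightarrow> rigidity_row q e = rigidity_row p e"
  by (auto simp: rigidity_row_def fun_eq_iff intro!: sum.cong)

lemma sum_rigidity_row_star_centre:
  assumes "w \<notin> N"
  shows "(\<Sum>x\<in>N. c {w, x} * rigidity_row q {w, x} (w, k)) = (\<Sum>x\<in>N. c {w, x} * (q w - q x) $ k)"
proof (rule sum.cong[OF refl])
  fix x assume "x \<in> N"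
  with assms have "w \<noteq> x" by auto
  then show "c {w, x} * rigidity_row q {w, x} (w, k) = c {w, x} * (q w - q x) $ k"
    by (simp add: rigidity_row_doubleton)
qed

lemma sum_rigidity_row_star_leaf:
  assumes "finite N" "w \<notin> N" "z \<noteq> w"
  shows "(\<Sum>x\<in>N. c {w, x} * rigidity_row q {w, x} (z, k)) =
    (if z \<in> N then c {w, z} * (q z - q w) $ k else 0)"
proof -
  have "(\<Sum>x\<in>N. c {w, x} * rigidity_row q {w, x} (z, k)) =
      (\<Sum>x\<in>N. if z = x then c {w, z} * (q z - q w) $ k else 0)"
  proof (rule sum.cong[OF refl])
    fix x assume "x \<in> N"
    with assms(2) have "w \<noteq> x" by auto
    then show "c {w, x} * rigidity_row q {w, x} (z, k) =
        (if z = x then c {w, z} * (q z - q w) $ k else 0)"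
      using assms(3) by (simp add: rigidity_row_doubleton)
  qed
  then show ?thesis
    using assms(1) by simp
qed

lemma rat_poly_fun_rigidity_row:
  assumes "finite V" "e \<subseteq> V"
  shows "rat_poly_fun (V \<times> UNIV) (\<lambda>x. rigidity_row (config x) e j)"
proof (cases "fst j \<in> e")
  case True
  have "finite e" using assms finite_subset by blast
  then show ?thesis
    using True assms unfolding rigidity_row_def
    by (auto simp: case_prod_beta
        intro!: rat_poly_fun_sum rat_poly_fun_diff rat_poly_fun_config_nth)
qed (simp add: rigidity_row_def case_prod_beta rat_poly_fun_of_int[of _ 0, simplified])

section \<open>Gram determinant of the rigidity matrix\<close>

definition gram_mat :: "nat \<Rightarrow> 't set \<Rightarrow> (nat \<Rightarrow> 't \<Rightarrow> real) \<Rightarrow> real mat" where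
  "gram_mat n T R = mat n n (\<lambda>(i, j). \<Sum>t\<in>T. R i t * R j t)"

lemma gram_mat_carrier: "gram_mat n T R \<in> carrier_mat n n"
  by (simp add: gram_mat_def)

lemma gram_mat_mult_vec:
  assumes "i < n" "v \<in> carrier_vec n"
  shows "vec_index (gram_mat n T R *\<^sub>v v) i = (\<Sum>t\<in>T. R i t * (\<Sum>j\<in>{0..<n}. vec_index v j * R j t))"
proof -
  have "vec_index (gram_mat n T R *\<^sub>v v) i = (\<Sum>j\<in>{0..<n}. (\<Sum>t\<in>T. R i t * R j t) * vec_index v j)"
    using assms by (simp add: gram_mat_def scalar_prod_def)
  also have "\<dots> = (\<Sum>j\<in>{0..<n}. \<Sum>t\<in>T. R i t * (vec_index v j * R j t))"
    by (simp add: sum_distrib_left sum_distrib_right mult_ac)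
  also have "\<dots> = (\<Sum>t\<in>T. R i t * (\<Sum>j\<in>{0..<n}. vec_index v j * R j t))"
    by (subst sum.swap) (simp add: sum_distrib_left)
  finally show ?thesis .
qed

lemma gram_mat_quadratic_form:
  assumes "v \<in> carrier_vec n"
  shows "(\<Sum>i\<in>{0..<n}. vec_index v i * vec_index (gram_mat n T R *\<^sub>v v) i) =
    (\<Sum>t\<in>T. (\<Sum>i\<in>{0..<n}. vec_index v i * R i t)\<^sup>2)"
proof -
  have "(\<Sum>i\<in>{0..<n}. vec_index v i * vec_index (gram_mat n T R *\<^sub>v v) i)
      = (\<Sum>i\<in>{0..<n}. \<Sum>t\<in>T. (vec_index v i * R i t) * (\<Sum>j\<in>{0..<n}. vec_index v j * R j t))"
    using assms by (simp add: gram_mat_mult_vec sum_distrib_left mult_ac)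
  also have "\<dots> = (\<Sum>t\<in>T. (\<Sum>i\<in>{0..<n}. vec_index v i * R i t)\<^sup>2)"
    by (subst sum.swap) (simp add: power2_eq_square sum_distrib_right)
  finally show ?thesis .
qed

lemma det_gram_mat_nonzero_iff:
  assumes "finite T"
  shows "det (gram_mat n T R) \<noteq> 0 \<longleftrightarrow>
    (\<forall>v. (\<forall>t\<in>T. (\<Sum>i\<in>{0..<n}. v i * R i t) = 0) \<longrightarrow> (\<forall>i<n. v i = 0))"
proof (intro iffI allI impI)
  fix v :: "nat \<Rightarrow> real" and i
  assume det: "det (gram_mat n T R) \<noteq> 0" and comb: "\<forall>t\<in>T. (\<Sum>i\<in>{0..<n}. v i * R i t) = 0"
    and "i < n"
  have "gram_mat n T R *\<^sub>v vec n v = 0\<^sub>v n"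
  proof (rule eq_vecI)
    fix i assume "i < dim_vec (0\<^sub>v n)"
    then show "vec_index (gram_mat n T R *\<^sub>v vec n v) i = vec_index (0\<^sub>v n) i"
      using comb by (simp add: gram_mat_mult_vec)
  qed (simp add: gram_mat_def)
  then have "vec n v = 0\<^sub>v n"
    using det det_0_iff_vec_prod_zero[OF gram_mat_carrier] vec_carrier by blast
  then show "v i = 0"
    using \<open>i < n\<close> by (metis index_vec index_zero_vec(1))
next
  assume indep: "\<forall>v. (\<forall>t\<in>T. (\<Sum>i\<in>{0..<n}. v i * R i t) = 0) \<longrightarrow> (\<forall>i<n. v i = 0)"
  show "det (gram_mat n T R) \<noteq> 0"
  proof
    assume "det (gram_mat n T R) = 0"
    then obtain w where w: "w \<in> carrier_vec n" "w \<noteq> 0\<^sub>v n" "gram_mat n T R *\<^sub>v w = 0\<^sub>v n"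
      using det_0_iff_vec_prod_zero[OF gram_mat_carrier] by blast
    have "(\<Sum>t\<in>T. (\<Sum>i\<in>{0..<n}. vec_index w i * R i t)\<^sup>2) = 0"
      using gram_mat_quadratic_form[OF w(1), of T R] w(3) by simp
    then have "\<forall>t\<in>T. (\<Sum>i\<in>{0..<n}. vec_index w i * R i t) = 0"
      using assms by (simp add: sum_nonneg_eq_0_iff)
    then have "w = 0\<^sub>v n"
      using indep w(1) by (intro eq_vecI) auto
    with w(2) show False ..
  qed
qed

lemma rat_poly_fun_det_gram_mat:
  assumes "finite T" "\<And>i t. i < n \<Longrightarrow> t \<in> T \<Longrightarrow> rat_poly_fun I (\<lambda>x. R x i t)"
  shows "rat_poly_fun I (\<lambda>x. det (gram_mat n T (R x)))"
proof -
  have "det (gram_mat n T (R x)) = (\<Sum>\<pi> | \<pi> permutes {0..<n}.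
      of_int (sign \<pi>) * (\<Prod>i\<in>{0..<n}. \<Sum>t\<in>T. R x i t * R x (\<pi> i) t))" for x
    unfolding det_def'[OF gram_mat_carrier]
    by (intro sum.cong refl arg_cong2[where f = "(*)"] prod.cong)
      (auto simp: gram_mat_def permutes_in_image)
  moreover have "rat_poly_fun I (\<lambda>x. \<Sum>\<pi> | \<pi> permutes {0..<n}.
      of_int (sign \<pi>) * (\<Prod>i\<in>{0..<n}. \<Sum>t\<in>T. R x i t * R x (\<pi> i) t))"
    using assms
    by (intro rat_poly_fun_sum rat_poly_fun_mult rat_poly_fun_of_int rat_poly_fun_prod)
      (auto simp: finite_permutations permutes_in_image)
  ultimately show ?thesis by simp
qed

definition self_stress :: "'a set set \<Rightarrow> ('a \<Rightarrow> real^3) \<Rightarrow> ('a set \<Rightarrow> real) \<Rightarrow> bool" where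
  "self_stress E p c \<longleftrightarrow> (\<forall>j. (\<Sum>e\<in>E. c e * rigidity_row p e j) = 0)"

lemma rows_lin_indep_iff_self_stress:
  "rows_lin_indep E p \<longleftrightarrow> (\<forall>c. self_stress E p c \<longrightarrow> (\<forall>e\<in>E. c e = 0))"
  by (simp add: rows_lin_indep_def self_stress_def)

lemma rows_lin_indep_iff_det_gram_mat:
  assumes "finite V" "\<forall>e\<in>E. e \<subseteq> V" "bij_betw \<iota> {0..<n} E"
  shows "rows_lin_indep E p \<longleftrightarrow> det (gram_mat n (V \<times> UNIV) (\<lambda>i. rigidity_row p (\<iota> i))) \<noteq> 0"
proof -
  have reindex: "(\<Sum>e\<in>E. c e * rigidity_row p e j) = (\<Sum>i\<in>{0..<n}. c (\<iota> i) * rigidity_row p (\<iota> i) j)"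
    for c j
    using sum.reindex_bij_betw[OF assms(3), symmetric] by simp
  have outside: "rigidity_row p (\<iota> i) j = 0" if "i < n" "j \<notin> V \<times> UNIV" for i j
  proof -
    have "fst j \<notin> \<iota> i"
      using that assms(2) bij_betw_apply[OF assms(3)] by (auto simp: mem_Times_iff)
    then show ?thesis by (metis prod.collapse rigidity_row_outside)
  qed
  have "rows_lin_indep E p \<longleftrightarrow>
    (\<forall>v. (\<forall>t\<in>V \<times> UNIV. (\<Sum>i\<in>{0..<n}. v i * rigidity_row p (\<iota> i) t) = 0) \<longrightarrow> (\<forall>i<n. v i = 0))"
  proof (intro iffI allI impI)
    fix v :: "nat \<Rightarrow> real" and i
    assume indep: "rows_lin_indep E p" and "i < n"
      and comb: "\<forall>t\<in>V \<times> UNIV. (\<Sum>i\<in>{0..<n}. v i * rigidity_row p (\<iota> i) t) = 0"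
    define c where "c = v \<circ> the_inv_into {0..<n} \<iota>"
    have c: "c (\<iota> i) = v i" if "i < n" for i
      using assms(3) that by (simp add: c_def bij_betw_def the_inv_into_f_f)
    have "self_stress E p c"
      unfolding self_stress_def reindex using comb outside
      by (auto simp: c intro: sum.neutral)
    then have "c (\<iota> i) = 0"
      using indep \<open>i < n\<close> assms(3) by (auto simp: rows_lin_indep_iff_self_stress bij_betw_def)
    then show "v i = 0" using c \<open>i < n\<close> by simp
  next
    assume H: "\<forall>v. (\<forall>t\<in>V \<times> UNIV. (\<Sum>i\<in>{0..<n}. v i * rigidity_row p (\<iota> i) t) = 0) \<longrightarrow> (\<forall>i<n. v i = 0)"
    show "rows_lin_indep E p"
      unfolding rows_lin_indep_iff_self_stress
    proof (intro allI impI ballI)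
      fix c e assume "self_stress E p c" "e \<in> E"
      then have "\<forall>t\<in>V \<times> UNIV. (\<Sum>i\<in>{0..<n}. (c \<circ> \<iota>) i * rigidity_row p (\<iota> i) t) = 0"
        by (simp add: self_stress_def reindex)
      then have "\<forall>i<n. (c \<circ> \<iota>) i = 0"
        using H by blast
      then show "c e = 0"
        using \<open>e \<in> E\<close> assms(3) by (force simp: bij_betw_def)
    qed
  qed
  also have "\<dots> \<longleftrightarrow> det (gram_mat n (V \<times> UNIV) (\<lambda>i. rigidity_row p (\<iota> i))) \<noteq> 0"
    using assms(1) by (intro det_gram_mat_nonzero_iff[symmetric]) simp
  finally show ?thesis .
qed

lemma rows_lin_indep_generic3:
  assumes "finite V" "\<forall>e\<in>E. e \<subseteq> V" "generic3 V p" "rows_lin_indep E q"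
  shows "rows_lin_indep E p"
proof -
  have "finite E"
    using assms(1,2) by (meson Pow_iff finite_Pow_iff finite_subset subsetI)
  then obtain \<iota> where \<iota>: "bij_betw \<iota> {0..<card E} E"
    using ex_bij_betw_nat_finite by blast
  define F where "F p = det (gram_mat (card E) (V \<times> UNIV) (\<lambda>i. rigidity_row p (\<iota> i)))" for p
  have "rat_poly_fun (V \<times> UNIV) (\<lambda>x. F (config x))"
    unfolding F_def using assms(1,2) bij_betw_apply[OF \<iota>]
    by (intro rat_poly_fun_det_gram_mat rat_poly_fun_rigidity_row) auto
  moreover have "F q \<noteq> 0"
    using assms(4) rows_lin_indep_iff_det_gram_mat[OF assms(1,2) \<iota>] by (simp add: F_def)
  ultimately have "F p \<noteq> 0"
    by (rule generic3_nonzero[OF assms(3)])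
  then show ?thesis
    using rows_lin_indep_iff_det_gram_mat[OF assms(1,2) \<iota>] by (simp add: F_def)
qed

section \<open>Triple products at generic points\<close>

lemma triple_product_nonzero_lin_indep:
  fixes x y z :: "real^3"
  assumes "x \<bullet> cross3 y z \<noteq> 0" "\<alpha> *\<^sub>R x + \<beta> *\<^sub>R y + \<gamma> *\<^sub>R z = 0"
  shows "\<alpha> = 0 \<and> \<beta> = 0 \<and> \<gamma> = 0"
proof -
  have cyclic: "y \<bullet> cross3 z x = x \<bullet> cross3 y z" "z \<bullet> cross3 x y = x \<bullet> cross3 y z"
    by (metis cross_triple inner_commute)+
  have "\<alpha> * (x \<bullet> cross3 y z) = 0" "\<beta> * (x \<bullet> cross3 y z) = 0" "\<gamma> * (x \<bullet> cross3 y z) = 0"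
    using arg_cong[OF assms(2), of "\<lambda>w. w \<bullet> cross3 y z"]
      arg_cong[OF assms(2), of "\<lambda>w. w \<bullet> cross3 z x"]
      arg_cong[OF assms(2), of "\<lambda>w. w \<bullet> cross3 x y"]
    by (simp_all add: inner_add_left dot_cross_self cyclic)
  then show ?thesis
    using assms(1) by simp
qed

lemma rat_poly_fun_triple_product:
  assumes "\<And>k. rat_poly_fun I (\<lambda>x. f x $ k)" "\<And>k. rat_poly_fun I (\<lambda>x. g x $ k)"
    "\<And>k. rat_poly_fun I (\<lambda>x. h x $ k)"
  shows "rat_poly_fun I (\<lambda>x. f x \<bullet> cross3 (g x) (h x))"
  unfolding inner_vec_def sum_3 cross_components inner_real_def
  using assms by (intro rat_poly_fun_add rat_poly_fun_mult rat_poly_fun_diff)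

lemma generic3_triple_product_nonzero:
  assumes "finite V" "generic3 V p" "w0 \<in> V" "w1 \<in> V" "w2 \<in> V" "w3 \<in> V"
    "distinct [w0, w1, w2, w3]"
  shows "(p w1 - p w0) \<bullet> cross3 (p w0 + of_rat r *\<^sub>R (p w1 - p w0) - p w2)
                                 (p w0 + of_rat r *\<^sub>R (p w1 - p w0) - p w3) \<noteq> 0"
proof -
  define F :: "('a \<Rightarrow> real^3) \<Rightarrow> real" where
    "F q = (q w1 - q w0) \<bullet> cross3 (q w0 + of_rat r *\<^sub>R (q w1 - q w0) - q w2)
                                  (q w0 + of_rat r *\<^sub>R (q w1 - q w0) - q w3)" for q
  have "rat_poly_fun (V \<times> UNIV) (\<lambda>x. F (config x))"
    unfolding F_def using assms(1,3-6)
    by (intro rat_poly_fun_triple_product)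
      (auto intro!: rat_poly_fun_add rat_poly_fun_diff rat_poly_fun_mult rat_poly_fun_const
        rat_poly_fun_config_nth)
  moreover
  define p0 :: "'a \<Rightarrow> real^3" where
    "p0 w = (if w = w1 then axis 1 1
      else if w = w2 then of_rat r *\<^sub>R axis 1 1 + axis 2 1
      else if w = w3 then of_rat r *\<^sub>R axis 1 1 + axis 3 1 else 0)" for w
  have "p0 w0 = 0" "p0 w1 = axis 1 1" "p0 w2 = of_rat r *\<^sub>R axis 1 1 + axis 2 1"
    "p0 w3 = of_rat r *\<^sub>R axis 1 1 + axis 3 1"
    using assms(7) by (auto simp: p0_def)
  then have "F p0 = axis 1 1 \<bullet> cross3 (axis 2 1) (axis 3 1)"
    by (simp add: F_def)
  then have "F p0 \<noteq> 0"
    by (simp add: cross_basis inner_axis_axis)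
  ultimately have "F p \<noteq> 0"
    by (rule generic3_nonzero[OF assms(2)])
  then show ?thesis
    by (simp add: F_def)
qed

lemma generic3_equilibrium_three_neighbours:
  assumes "finite V" "generic3 V p" "w \<in> V" "N \<subseteq> V" "w \<notin> N" "card N = 3"
    and "(\<Sum>y\<in>N. d y *\<^sub>R (p w - p y)) = 0"
  shows "\<forall>y\<in>N. d y = 0"
proof -
  obtain y1 y2 y3 where N: "N = {y1, y2, y3}" "distinct [y1, y2, y3]"
    using assms(6) by (auto simp: card_3_iff)
  have "(p y1 - p w) \<bullet> cross3 (p w - p y2) (p w - p y3) \<noteq> 0"
    using generic3_triple_product_nonzero[OF assms(1,2), of w y1 y2 y3 0] assms(3-5) N by auto
  moreover have "(- d y1) *\<^sub>R (p y1 - p w) + d y2 *\<^sub>R (p w - p y2) + d y3 *\<^sub>R (p w - p y3) = 0"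
    using assms(7) N by (simp add: algebra_simps)
  ultimately have "- d y1 = 0 \<and> d y2 = 0 \<and> d y3 = 0"
    by (rule triple_product_nonzero_lin_indep)
  then show ?thesis
    using N(1) by simp
qed

section \<open>Stresses of a double-1-extension\<close>

lemma card_3_containing_2E:
  assumes "card N = 3" "u \<in> N" "v \<in> N" "u \<noteq> v"
  obtains x where "N = {u, v, x}" "x \<noteq> u" "x \<noteq> v"
proof -
  have "card (N - {u, v}) = 1"
    using assms by (simp add: card_Diff_subset card.infinite[of N])
  then obtain x where x: "N - {u, v} = {x}"
    by (rule card_1_singletonE)
  have "N = {u, v, x}"
    using assms(2,3) x by blast
  moreover have "x \<noteq> u" "x \<noteq> v"
    using x by blast+
  ultimately show ?thesis
    by (rule that)
qed

lemma card_3_containing_1E: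
  assumes "card N = 3" "u \<in> N"
  obtains x1 x2 where "N = {u, x1, x2}" "distinct [u, x1, x2]"
proof -
  have "card (N - {u}) = 2"
    using assms by simp
  then obtain x1 x2 where x: "N - {u} = {x1, x2}" "x1 \<noteq> x2"
    by (auto simp: card_2_iff)
  have "N = {u, x1, x2}"
    using assms(2) x(1) by blast
  moreover have "u \<notin> {x1, x2}"
    using x(1) by blast
  then have "distinct [u, x1, x2]"
    using x(2) by simp
  ultimately show ?thesis
    by (rule that)
qed

lemma rows_lin_indep_cong:
  assumes "\<And>e w. e \<in> E \<Longrightarrow> w \<in> e \<Longrightarrow> q w = p w"
  shows "rows_lin_indep E q \<longleftrightarrow> rows_lin_indep E p"
proof -
  have "rigidity_row q e = rigidity_row p e" if "e \<in> E" for e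
    using assms that by (intro rigidity_row_cong) auto
  then show ?thesis
    unfolding rows_lin_indep_def by (simp cong: sum.cong)
qed

lemma generic3_subset: "generic3 V p \<Longrightarrow> V' \<subseteq> V \<Longrightarrow> finite V \<Longrightarrow> generic3 V' p"
  unfolding generic3_def by (erule alg_indep_over_Q_subset) auto

locale double_1_ext =
  fixes V' :: "'a set" and E' :: "'a set set" and u v a b :: 'a and Na Nb :: "'a set"
  assumes finite_V': "finite V'"
    and E'_subset: "\<forall>e\<in>E'. e \<subseteq> V'"
    and uv_in_E': "{u, v} \<in> E'"
    and u_ne_v: "u \<noteq> v"
    and a_notin_V': "a \<notin> V'" and b_notin_V': "b \<notin> V'" and a_ne_b: "a \<noteq> b"
    and Na_subset: "Na \<subseteq> V'" and Nb_subset: "Nb \<subseteq> V'"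
    and card_Na: "card Na = 3" and card_Nb: "card Nb = 3"
begin

definition edges :: "'a set set" where
  "edges = (E' - {{u, v}}) \<union> {{a, b}} \<union> (\<lambda>x. {a, x}) ` Na \<union> (\<lambda>y. {b, y}) ` Nb"

lemma swap: "double_1_ext V' E' u v b a Nb Na"
  using double_1_ext_axioms unfolding double_1_ext_def by auto

lemma finite_E': "finite E'"
  using finite_V' E'_subset by (meson Pow_iff finite_Pow_iff finite_subset subsetI)

lemma finite_Na: "finite Na" and finite_Nb: "finite Nb"
  using card_Na card_Nb by (auto intro: card_ge_0_finite)

lemma edges_subset: "\<forall>e\<in>edges. e \<subseteq> V' \<union> {a, b}"
  using E'_subset Na_subset Nb_subset by (auto simp: edges_def)

lemma sum_edges:
  "(\<Sum>e\<in>edges. f e) = (\<Sum>e\<in>E' - {{u, v}}. f e) + f {a, b} + (\<Sum>x\<in>Na. f {a, x}) + (\<Sum>y\<in>Nb. f {b, y})"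
proof -
  have inj: "inj_on (\<lambda>x. {a, x}) Na" "inj_on (\<lambda>y. {b, y}) Nb"
    using Na_subset Nb_subset a_notin_V' b_notin_V' by (auto simp: inj_on_def doubleton_eq_iff)
  have "(E' - {{u, v}}) \<inter> {{a, b}} = {}"
    "((E' - {{u, v}}) \<union> {{a, b}}) \<inter> (\<lambda>x. {a, x}) ` Na = {}"
    "((E' - {{u, v}}) \<union> {{a, b}} \<union> (\<lambda>x. {a, x}) ` Na) \<inter> (\<lambda>y. {b, y}) ` Nb = {}"
    using E'_subset Na_subset Nb_subset a_notin_V' b_notin_V' a_ne_b
    by (auto simp: doubleton_eq_iff)
  then show ?thesis
    using finite_E' finite_Na finite_Nb
    by (simp add: edges_def sum.union_disjoint sum.reindex[OF inj(1)] sum.reindex[OF inj(2)] add_ac)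
qed

lemma self_stress_at_a:
  assumes "self_stress edges q c"
  shows "c {a, b} *\<^sub>R (q a - q b) + (\<Sum>x\<in>Na. c {a, x} *\<^sub>R (q a - q x)) = 0"
proof (subst Finite_Cartesian_Product.vec_eq_iff, intro allI)
  fix k
  have "a \<notin> Na" "a \<notin> Nb" "b \<notin> Nb"
    using a_notin_V' b_notin_V' Na_subset Nb_subset by auto
  moreover have "(\<Sum>e\<in>E' - {{u, v}}. c e * rigidity_row q e (a, k)) = 0"
    using E'_subset a_notin_V' by (intro sum.neutral) (auto intro: rigidity_row_outside)
  moreover have "(\<Sum>e\<in>edges. c e * rigidity_row q e (a, k)) = 0"
    using assms by (simp add: self_stress_def)
  ultimately show "(c {a, b} *\<^sub>R (q a - q b) + (\<Sum>x\<in>Na. c {a, x} *\<^sub>R (q a - q x))) $ k = 0 $ k"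
    unfolding sum_edges
    using a_ne_b finite_Nb
    by (simp add: sum_rigidity_row_star_centre sum_rigidity_row_star_leaf rigidity_row_doubleton
        sum_component)
qed

lemma edges_swap: "double_1_ext.edges E' u v b a Nb Na = edges"
  unfolding edges_def double_1_ext.edges_def[OF swap] by (auto simp: insert_commute)

lemma self_stress_at_b:
  assumes "self_stress edges q c"
  shows "c {a, b} *\<^sub>R (q b - q a) + (\<Sum>y\<in>Nb. c {b, y} *\<^sub>R (q b - q y)) = 0"
  using double_1_ext.self_stress_at_a[OF swap] assms by (simp add: edges_swap insert_commute)

lemma self_stress_restrict:
  assumes "self_stress edges q c"
    and "\<And>z k. z \<in> V' \<Longrightarrow> (if z \<in> Na then c {a, z} * (q z - q a) $ k else 0)
      + (if z \<in> Nb then c {b, z} * (q z - q b) $ k else 0) = \<omega> * rigidity_row q {u, v} (z, k)"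
  shows "self_stress E' q (c({u, v} := \<omega>))"
  unfolding self_stress_def
proof
  fix j :: "'a \<times> 3"
  obtain z k where j: "j = (z, k)" by fastforce
  have "(\<Sum>e\<in>E'. (c({u, v} := \<omega>)) e * rigidity_row q e j)
      = (\<Sum>e\<in>E' - {{u, v}}. c e * rigidity_row q e j) + \<omega> * rigidity_row q {u, v} j"
    using uv_in_E' finite_E' by (simp add: sum.remove add.commute)
  also have "\<dots> = 0"
  proof (cases "z \<in> V'")
    case True
    then have "z \<noteq> a" "z \<noteq> b" "a \<notin> Na" "b \<notin> Nb"
      using a_notin_V' b_notin_V' Na_subset Nb_subset by auto
    then have "rigidity_row q {a, b} (z, k) = 0"
      by (simp add: rigidity_row_doubleton[OF a_ne_b])
    moreover have "(\<Sum>e\<in>edges. c e * rigidity_row q e (z, k)) = 0"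
      using assms(1) by (simp add: self_stress_def)
    ultimately have "(\<Sum>e\<in>E' - {{u, v}}. c e * rigidity_row q e (z, k))
        + (\<Sum>x\<in>Na. c {a, x} * rigidity_row q {a, x} (z, k))
        + (\<Sum>y\<in>Nb. c {b, y} * rigidity_row q {b, y} (z, k)) = 0"
      unfolding sum_edges by simp
    moreover have "(\<Sum>x\<in>Na. c {a, x} * rigidity_row q {a, x} (z, k)) =
        (if z \<in> Na then c {a, z} * (q z - q a) $ k else 0)"
      "(\<Sum>y\<in>Nb. c {b, y} * rigidity_row q {b, y} (z, k)) =
        (if z \<in> Nb then c {b, z} * (q z - q b) $ k else 0)"
      by (rule sum_rigidity_row_star_leaf[OF finite_Na \<open>a \<notin> Na\<close> \<open>z \<noteq> a\<close>],
          rule sum_rigidity_row_star_leaf[OF finite_Nb \<open>b \<notin> Nb\<close> \<open>z \<noteq> b\<close>])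
    ultimately show ?thesis
      using assms(2)[OF True, of k] unfolding j by linarith
  next
    case False
    then have "rigidity_row q e j = 0" if "e \<in> E'" for e
      using that E'_subset j by (auto intro: rigidity_row_outside)
    then show ?thesis
      using uv_in_E' by simp
  qed
  finally show "(\<Sum>e\<in>E'. (c({u, v} := \<omega>)) e * rigidity_row q e j) = 0" .
qed

lemma zero_on_edgesI:
  assumes "\<forall>e\<in>E' - {{u, v}}. c e = 0" "c {a, b} = 0" "\<forall>x\<in>Na. c {a, x} = 0" "\<forall>y\<in>Nb. c {b, y} = 0"
  shows "\<forall>e\<in>edges. c e = 0"
  using assms unfolding edges_def by blast

lemma rows_lin_indep_a_at_midpoint:
  assumes indep: "rows_lin_indep E' q"
    and Na: "Na = {u, v, x}"
    and qa: "q a = q u + (1/2) *\<^sub>R (q v - q u)"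
    and nondeg: "(q v - q u) \<bullet> cross3 (q a - q x) (q a - q b) \<noteq> 0"
    and b_rigid: "\<And>d. (\<Sum>y\<in>Nb. d y *\<^sub>R (q b - q y)) = 0 \<Longrightarrow> \<forall>y\<in>Nb. d y = 0"
  shows "rows_lin_indep edges q"
  unfolding rows_lin_indep_iff_self_stress
proof (intro allI impI)
  fix c assume stress: "self_stress edges q c"
  have x: "x \<noteq> u" "x \<noteq> v"
    using card_Na Na u_ne_v by (auto simp: card_insert_if split: if_splits)
  have "((c {a, u} - c {a, v}) / 2) *\<^sub>R (q v - q u) + c {a, x} *\<^sub>R (q a - q x)
      + c {a, b} *\<^sub>R (q a - q b)
      = c {a, b} *\<^sub>R (q a - q b) + (\<Sum>y\<in>Na. c {a, y} *\<^sub>R (q a - q y))"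
    using x u_ne_v unfolding Na qa by (simp add: Finite_Cartesian_Product.vec_eq_iff field_simps)
  also have "\<dots> = 0"
    by (rule self_stress_at_a[OF stress])
  finally have "(c {a, u} - c {a, v}) / 2 = 0 \<and> c {a, x} = 0 \<and> c {a, b} = 0"
    by (rule triple_product_nonzero_lin_indep[OF nondeg])
  then have cau: "c {a, v} = c {a, u}" and cax: "c {a, x} = 0" and cab: "c {a, b} = 0"
    by auto
  have cb: "\<forall>y\<in>Nb. c {b, y} = 0"
    using b_rigid self_stress_at_b[OF stress] cab by simp
  have "self_stress E' q (c({u, v} := c {a, u} / 2))"
  proof (rule self_stress_restrict[OF stress])
    fix z k assume "z \<in> V'"
    show "(if z \<in> Na then c {a, z} * (q z - q a) $ k else 0)
      + (if z \<in> Nb then c {b, z} * (q z - q b) $ k else 0)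
      = c {a, u} / 2 * rigidity_row q {u, v} (z, k)"
      using x u_ne_v cau cax cb unfolding Na qa rigidity_row_doubleton[OF u_ne_v]
      by (auto simp: field_simps)
  qed
  then have stress0: "\<forall>e\<in>E'. (c({u, v} := c {a, u} / 2)) e = 0"
    using indep unfolding rows_lin_indep_iff_self_stress by blast
  then have "\<forall>e\<in>E' - {{u, v}}. c e = 0" "c {a, u} = 0"
    using bspec[OF stress0 uv_in_E'] by (metis Diff_iff fun_upd_other singletonI, simp)
  moreover have "\<forall>y\<in>Na. c {a, y} = 0"
    using cau cax \<open>c {a, u} = 0\<close> unfolding Na by simp
  ultimately show "\<forall>e\<in>edges. c e = 0"
    using cab cb by (intro zero_on_edgesI)
qed

lemma rows_lin_indep_a_b_trisecting:
  assumes indep: "rows_lin_indep E' q"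
    and Na: "Na = {u, x1, x2}" "v \<notin> Na" and Nb: "Nb = {v, y1, y2}" "u \<notin> Nb"
    and qa: "q a = q u + (1/3) *\<^sub>R (q v - q u)" and qb: "q b = q u + (2/3) *\<^sub>R (q v - q u)"
    and nondeg_a: "(q v - q u) \<bullet> cross3 (q a - q x1) (q a - q x2) \<noteq> 0"
    and nondeg_b: "(q v - q u) \<bullet> cross3 (q b - q y1) (q b - q y2) \<noteq> 0"
  shows "rows_lin_indep edges q"
  unfolding rows_lin_indep_iff_self_stress
proof (intro allI impI)
  fix c assume stress: "self_stress edges q c"
  have x: "distinct [u, x1, x2]" and y: "distinct [v, y1, y2]"
    using card_Na card_Nb Na Nb by (auto simp: card_insert_if split: if_splits)
  have "((c {a, u} - c {a, b}) / 3) *\<^sub>R (q v - q u) + c {a, x1} *\<^sub>R (q a - q x1)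
      + c {a, x2} *\<^sub>R (q a - q x2)
      = c {a, b} *\<^sub>R (q a - q b) + (\<Sum>x\<in>Na. c {a, x} *\<^sub>R (q a - q x))"
    using x unfolding Na qa qb by (simp add: Finite_Cartesian_Product.vec_eq_iff field_simps)
  also have "\<dots> = 0"
    by (rule self_stress_at_a[OF stress])
  finally have "(c {a, u} - c {a, b}) / 3 = 0 \<and> c {a, x1} = 0 \<and> c {a, x2} = 0"
    by (rule triple_product_nonzero_lin_indep[OF nondeg_a])
  then have cau: "c {a, u} = c {a, b}" and cax: "c {a, x1} = 0" "c {a, x2} = 0"
    by auto
  have "((c {a, b} - c {b, v}) / 3) *\<^sub>R (q v - q u) + c {b, y1} *\<^sub>R (q b - q y1)
      + c {b, y2} *\<^sub>R (q b - q y2)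
      = c {a, b} *\<^sub>R (q b - q a) + (\<Sum>y\<in>Nb. c {b, y} *\<^sub>R (q b - q y))"
    using y unfolding Nb qa qb by (simp add: Finite_Cartesian_Product.vec_eq_iff field_simps)
  also have "\<dots> = 0"
    by (rule self_stress_at_b[OF stress])
  finally have "(c {a, b} - c {b, v}) / 3 = 0 \<and> c {b, y1} = 0 \<and> c {b, y2} = 0"
    by (rule triple_product_nonzero_lin_indep[OF nondeg_b])
  then have cbv: "c {b, v} = c {a, b}" and cby: "c {b, y1} = 0" "c {b, y2} = 0"
    by auto
  have "self_stress E' q (c({u, v} := c {a, b} / 3))"
  proof (rule self_stress_restrict[OF stress])
    fix z k assume "z \<in> V'"
    show "(if z \<in> Na then c {a, z} * (q z - q a) $ k else 0)
      + (if z \<in> Nb then c {b, z} * (q z - q b) $ k else 0)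
      = c {a, b} / 3 * rigidity_row q {u, v} (z, k)"
    proof -
      consider "z = u" | "z = v" | "z \<noteq> u" "z \<noteq> v" by blast
      then show ?thesis
      proof cases
        case 1
        then show ?thesis
          using Na Nb cau u_ne_v by (simp add: qa rigidity_row_doubleton field_simps)
      next
        case 2
        then show ?thesis
          using Na Nb cbv u_ne_v by (simp add: qb rigidity_row_doubleton field_simps)
      next
        case 3
        then have "z \<in> Na \<Longrightarrow> c {a, z} = 0" "z \<in> Nb \<Longrightarrow> c {b, z} = 0"
          using Na Nb cax cby by auto
        then show ?thesis
          using 3 u_ne_v by (simp add: rigidity_row_doubleton)
      qed
    qed
  qed
  then have stress0: "\<forall>e\<in>E'. (c({u, v} := c {a, b} / 3)) e = 0"
    using indep unfolding rows_lin_indep_iff_self_stress by blast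
  then have "\<forall>e\<in>E' - {{u, v}}. c e = 0" and cab: "c {a, b} = 0"
    using bspec[OF stress0 uv_in_E'] by (metis Diff_iff fun_upd_other singletonI, simp)
  moreover have "\<forall>x\<in>Na. c {a, x} = 0" "\<forall>y\<in>Nb. c {b, y} = 0"
    using cau cax cbv cby cab unfolding Na Nb by simp_all
  ultimately show "\<forall>e\<in>edges. c e = 0"
    by (intro zero_on_edgesI)
qed

lemma exists_rows_lin_indep_midpoint:
  assumes gen: "generic3 (V' \<union> {a, b}) p" and indep: "rows_lin_indep E' p"
    and "u \<in> Na" "v \<in> Na"
  shows "\<exists>q. rows_lin_indep edges q"
proof -
  obtain x where Na: "Na = {u, v, x}" "x \<noteq> u" "x \<noteq> v"
    using card_Na assms(3,4) u_ne_v by (rule card_3_containing_2E)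
  have fin: "finite (V' \<union> {a, b})"
    using finite_V' by simp
  have V': "u \<in> V'" "v \<in> V'" "x \<in> V'"
    using Na Na_subset by auto
  define q where "q = p(a := p u + (1/2) *\<^sub>R (p v - p u))"
  have q_eq_p: "q w = p w" if "w \<in> V' \<union> {b}" for w
    using that a_notin_V' a_ne_b by (auto simp: q_def)
  have qa: "q a = q u + (1/2) *\<^sub>R (q v - q u)"
    using V' by (simp add: q_eq_p) (simp add: q_def)
  have "rows_lin_indep E' q \<longleftrightarrow> rows_lin_indep E' p"
    using E'_subset a_notin_V' by (intro rows_lin_indep_cong) (auto simp: q_def)
  with indep have "rows_lin_indep E' q" by simp
  moreover have "(q v - q u) \<bullet> cross3 (q a - q x) (q a - q b) \<noteq> 0"
  proof -
    have "u \<noteq> b" "v \<noteq> b" "x \<noteq> b"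
      using V' b_notin_V' by auto
    then show ?thesis
      using generic3_triple_product_nonzero[OF fin gen, of u v x b "1/2"] V' Na(2,3) u_ne_v
      by (simp add: q_eq_p qa of_rat_divide)
  qed
  moreover have "\<forall>y\<in>Nb. d y = 0" if "(\<Sum>y\<in>Nb. d y *\<^sub>R (q b - q y)) = 0" for d
  proof -
    have "(\<Sum>y\<in>Nb. d y *\<^sub>R (p b - p y)) = 0"
      using that Nb_subset by (simp add: q_eq_p subset_iff cong: sum.cong)
    then show ?thesis
      using generic3_equilibrium_three_neighbours[OF fin gen] Nb_subset b_notin_V' card_Nb by blast
  qed
  ultimately show ?thesis
    using rows_lin_indep_a_at_midpoint[OF _ Na(1) qa] by blast
qed

lemma exists_rows_lin_indep_trisecting:
  assumes gen: "generic3 (V' \<union> {a, b}) p" and indep: "rows_lin_indep E' p"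
    and "u \<in> Na" "v \<notin> Na" "v \<in> Nb" "u \<notin> Nb"
  shows "\<exists>q. rows_lin_indep edges q"
proof -
  obtain x1 x2 where Na: "Na = {u, x1, x2}" "distinct [u, x1, x2]"
    using card_Na assms(3) by (rule card_3_containing_1E)
  obtain y1 y2 where Nb: "Nb = {v, y1, y2}" "distinct [v, y1, y2]"
    using card_Nb assms(5) by (rule card_3_containing_1E)
  have fin: "finite (V' \<union> {a, b})"
    using finite_V' by simp
  have V': "u \<in> V'" "v \<in> V'" "x1 \<in> V'" "x2 \<in> V'" "y1 \<in> V'" "y2 \<in> V'"
    using Na Nb Na_subset Nb_subset by auto
  have "x1 \<noteq> v" "x2 \<noteq> v" "y1 \<noteq> u" "y2 \<noteq> u"
    using Na(1) Nb(1) assms(4,6) by auto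
  define q where "q = p(a := p u + (1/3) *\<^sub>R (p v - p u), b := p u + (2/3) *\<^sub>R (p v - p u))"
  have q_eq_p: "q w = p w" if "w \<in> V'" for w
    using that a_notin_V' b_notin_V' by (auto simp: q_def)
  have qa: "q a = q u + (1/3) *\<^sub>R (q v - q u)"
    using V' a_ne_b by (simp add: q_eq_p) (simp add: q_def)
  have qb: "q b = q u + (2/3) *\<^sub>R (q v - q u)"
    using V' by (simp add: q_eq_p) (simp add: q_def)
  have "rows_lin_indep E' q \<longleftrightarrow> rows_lin_indep E' p"
    using E'_subset a_notin_V' b_notin_V' by (intro rows_lin_indep_cong) (auto simp: q_def)
  with indep have "rows_lin_indep E' q" by simp
  moreover have "(q v - q u) \<bullet> cross3 (q a - q x1) (q a - q x2) \<noteq> 0"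
    using generic3_triple_product_nonzero[OF fin gen, of u v x1 x2 "1/3"] V' Na(2) u_ne_v
      \<open>x1 \<noteq> v\<close> \<open>x2 \<noteq> v\<close>
    by (simp add: q_eq_p qa of_rat_divide)
  moreover have "(q v - q u) \<bullet> cross3 (q b - q y1) (q b - q y2) \<noteq> 0"
    using generic3_triple_product_nonzero[OF fin gen, of u v y1 y2 "2/3"] V' Nb(2) u_ne_v
      \<open>y1 \<noteq> u\<close> \<open>y2 \<noteq> u\<close>
    by (simp add: q_eq_p qb of_rat_divide)
  ultimately show ?thesis
    using rows_lin_indep_a_b_trisecting[OF _ Na(1) assms(4) Nb(1) assms(6) qa qb] by blast
qed

lemma exists_rows_lin_indep:
  assumes "generic3 (V' \<union> {a, b}) p" "rows_lin_indep E' p" "u \<in> Na \<union> Nb" "v \<in> Na \<union> Nb"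
  shows "\<exists>q. rows_lin_indep edges q"
proof -
  interpret ba: double_1_ext V' E' u v b a Nb Na
    by (rule swap)
  have gen_ba: "generic3 (V' \<union> {b, a}) p"
    using assms(1) by (simp add: insert_commute)
  consider "u \<in> Na" "v \<in> Na" | "u \<in> Nb" "v \<in> Nb"
    | "u \<in> Na" "v \<notin> Na" "v \<in> Nb" "u \<notin> Nb" | "u \<in> Nb" "v \<notin> Nb" "v \<in> Na" "u \<notin> Na"
    using assms(3,4) by blast
  then show ?thesis
  proof cases
    case 1
    then show ?thesis
      using exists_rows_lin_indep_midpoint assms(1,2) by blast
  next
    case 2
    then show ?thesis
      using ba.exists_rows_lin_indep_midpoint gen_ba assms(2) by (simp add: edges_swap)
  next
    case 3
    then show ?thesis
      using exists_rows_lin_indep_trisecting assms(1,2) by blast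
  next
    case 4
    then show ?thesis
      using ba.exists_rows_lin_indep_trisecting gen_ba assms(2) by (simp add: edges_swap)
  qed
qed

end

theorem lemma5p7:
  fixes V' V :: "'a set" and E' E :: "'a set set"
  assumes "simple_graph V' E'"
    and "R3_independent V' E'"
    and "double_1_extension V' E' V E"
  shows "R3_independent V E"
proof -
  obtain u v a b Na Nb where uv: "{u, v} \<in> E'" and ab: "a \<notin> V'" "b \<notin> V'" "a \<noteq> b"
    and N: "Na \<subseteq> V'" "Nb \<subseteq> V'" "card Na = 3" "card Nb = 3" "u \<in> Na \<union> Nb" "v \<in> Na \<union> Nb"
    and V: "V = V' \<union> {a, b}"
    and E: "E = (E' - {{u, v}}) \<union> {{a, b}} \<union> (\<lambda>x. {a, x}) ` Na \<union> (\<lambda>y. {b, y}) ` Nb"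
    using assms(3) unfolding double_1_extension_def by blast
  have "u \<noteq> v"
    using assms(1) uv unfolding simple_graph_def by fastforce
  then interpret double_1_ext V' E' u v a b Na Nb
    using assms(1) uv ab N unfolding simple_graph_def by unfold_locales auto
  show ?thesis
    unfolding R3_independent_def
  proof (intro allI impI)
    fix p assume gen: "generic3 V p"
    have "rows_lin_indep E' p"
      using assms(2) generic3_subset[OF gen] finite_V' V unfolding R3_independent_def by auto
    then obtain q where "rows_lin_indep edges q"
      using exists_rows_lin_indep gen V N(5,6) by blast
    then show "rows_lin_indep E p"
      using rows_lin_indep_generic3[OF _ edges_subset] gen finite_V' V E edges_def by simp
  qed
qed

end
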